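(* Let $R$ be a local ring and $s\in R$ a central element. Then $A\in M_2(R;s)$ is strongly clean if and only if one of the following holds: (1) $A\in U\big(M_2(R;s)\big)$; (2) $I_2-A\in U\big(M_2(R;s)\big)$; (3) $A$ is similar to $\left[\begin{smallmatrix} a&0\\ 0&b\end{smallmatrix}\right]$ for some $a,b\in R$.
   Context: All rings are associative with identity. A ring $R$ is local if $R/J(R)$ is a division ring, where $J(R)$ is the Jacobson radical; $U(T)$ is the group of units of a ring $T$. For a ring $R$ and a central element $s\in R$, $M_2(R;s)$ denotes the ring whose elements are the $2\times 2$ arrays $\left[\begin{smallmatrix} a&b\\ c&d\end{smallmatrix}\right]$ with $a,b,c,d\in R$, with componentwise addition and multiplication $\left[\begin{smallmatrix} a&b\\ c&d\end{smallmatrix}\right]\left[\begin{smallmatrix} a'&b'\\ c'&d'\end{smallmatrix}\right]=\left[\begin{smallmatrix} aa'+s^2bc'&ab'+bd'\\ ca'+dc'&s^2cb'+dd'\end{smallmatrix}\right]$, with identity $I_2$. Two elements $A,B\in M_2(R;s)$ are similar if $B=P^{-1}AP$ for some unit $P$ of $M_2(R;s)$. An element $a$ of a ring $T$ is strongly clean if there is an idempotent $e\in T$ with $ae=ea$ and $a-e\in U(T)$. *)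

theory Defs
  imports Main
begin

definition left_ideal :: "'a::ring_1 set \<Rightarrow> bool" where
  "left_ideal I \<longleftrightarrow> 0 \<in> I \<and> (\<forall>x\<in>I. \<forall>y\<in>I. x + y \<in> I) \<and> (\<forall>x\<in>I. - x \<in> I)
     \<and> (\<forall>r. \<forall>x\<in>I. r * x \<in> I)"

definition maximal_left_ideal :: "'a::ring_1 set \<Rightarrow> bool" where
  "maximal_left_ideal I \<longleftrightarrow> left_ideal I \<and> I \<noteq> UNIV \<and>
     (\<forall>K. left_ideal K \<and> I \<subseteq> K \<longrightarrow> K = I \<or> K = UNIV)"

definition jacobson :: "'a::ring_1 set" where
  "jacobson = \<Inter> {I. maximal_left_ideal I}"

text \<open>R is local iff R/J(R) is a division ring: the quotient is nontrivial and
  every nonzero coset has a two-sided inverse modulo J(R).\<close>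
definition local_ring :: "'a::ring_1 itself \<Rightarrow> bool" where
  "local_ring (_::'a itself) \<longleftrightarrow> (jacobson :: 'a set) \<noteq> UNIV \<and>
     (\<forall>x::'a. x \<notin> jacobson \<longrightarrow> (\<exists>y. x * y - 1 \<in> jacobson \<and> y * x - 1 \<in> jacobson))"

datatype 'a m2 = M2 'a 'a 'a 'a

fun m2_mult :: "'a::ring_1 \<Rightarrow> 'a m2 \<Rightarrow> 'a m2 \<Rightarrow> 'a m2" where
  "m2_mult s (M2 a b c d) (M2 a' b' c' d') =
     M2 (a*a' + s^2*b*c') (a*b' + b*d') (c*a' + d*c') (s^2*c*b' + d*d')"

fun m2_sub :: "'a::ring_1 m2 \<Rightarrow> 'a m2 \<Rightarrow> 'a m2" where
  "m2_sub (M2 a b c d) (M2 a' b' c' d') = M2 (a - a') (b - b') (c - c') (d - d')"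

definition I2 :: "'a::ring_1 m2" where
  "I2 = M2 1 0 0 1"

definition m2_unit :: "'a::ring_1 \<Rightarrow> 'a m2 \<Rightarrow> bool" where
  "m2_unit s P \<longleftrightarrow> (\<exists>Q. m2_mult s P Q = I2 \<and> m2_mult s Q P = I2)"

definition m2_similar :: "'a::ring_1 \<Rightarrow> 'a m2 \<Rightarrow> 'a m2 \<Rightarrow> bool" where
  "m2_similar s A B \<longleftrightarrow> (\<exists>P Q. m2_mult s P Q = I2 \<and> m2_mult s Q P = I2 \<and>
      B = m2_mult s (m2_mult s Q A) P)"

definition m2_strongly_clean :: "'a::ring_1 \<Rightarrow> 'a m2 \<Rightarrow> bool" where
  "m2_strongly_clean s A \<longleftrightarrow> (\<exists>E. m2_mult s E E = E \<and> m2_mult s A E = m2_mult s E A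
      \<and> m2_unit s (m2_sub A E))"

end

theory Submission
  imports Defs
begin

text \<open>
  A strongly clean decomposition A = E + U with E idempotent commuting with A gives
  E = 0 (then A is a unit), E = I (then I - A is a unit), or a nontrivial idempotent.
  Over a local ring one of the diagonal entries e, 1 - e of a nontrivial idempotent is a
  unit; say e. A Schur-complement computation shows that the matrix obtained from E by
  negating the second column is a unit P with E P = P diag(1,0), and anything commuting
  with diag(1,0) is diagonal, so A is similar to a diagonal matrix. Conversely, diagonal
  matrices are strongly clean because every element a of a local ring has a or a - 1
  invertible, and strong cleanness is invariant under similarity.
\<close>

definition ring_unit :: "'a::ring_1 \<Rightarrow> bool" where
  "ring_unit x \<longleftrightarrow> (\<exists>y. x * y = 1 \<and> y * x = 1)"

lemma left_ideal_eq_UNIV_if_one: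
  assumes "left_ideal I" and "(1::'a::ring_1) \<in> I"
  shows "I = UNIV"
  using assms unfolding left_ideal_def by (metis UNIV_eq_I mult.right_neutral)

lemma left_ideal_principal: "left_ideal (range (\<lambda>r. r * (x::'a::ring_1)))"
  unfolding left_ideal_def
proof (intro conjI ballI allI)
  show "0 \<in> range (\<lambda>r. r * x)" by (metis mult_zero_left rangeI)
next
  fix y z assume "y \<in> range (\<lambda>r. r * x)" "z \<in> range (\<lambda>r. r * x)"
  then obtain a b where "y = a * x" "z = b * x" by blast
  then show "y + z \<in> range (\<lambda>r. r * x)" by (metis distrib_right rangeI)
next
  fix y assume "y \<in> range (\<lambda>r. r * x)"
  then obtain a where "y = a * x" by blast
  then show "- y \<in> range (\<lambda>r. r * x)" by (metis minus_mult_left rangeI)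
next
  fix r y assume "y \<in> range (\<lambda>r. r * x)"
  then obtain a where "y = a * x" by blast
  then show "r * y \<in> range (\<lambda>r. r * x)" by (metis mult.assoc rangeI)
qed

lemma left_ideal_Union_chain:
  assumes "C \<noteq> {}" and "\<forall>I\<in>C. left_ideal (I::'a::ring_1 set)"
    and "\<forall>X\<in>C. \<forall>Y\<in>C. X \<subseteq> Y \<or> Y \<subseteq> X"
  shows "left_ideal (\<Union>C)"
  unfolding left_ideal_def
proof (intro conjI ballI allI)
  show "0 \<in> \<Union>C" using assms(1,2) by (auto simp: left_ideal_def)
next
  fix x y assume "x \<in> \<Union>C" "y \<in> \<Union>C"
  then obtain X Y where "X \<in> C" "Y \<in> C" "x \<in> X" "y \<in> Y" by auto
  with assms(2,3) show "x + y \<in> \<Union>C"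
    unfolding left_ideal_def by (metis UnionI subsetD)
qed (use assms(2) in \<open>unfold left_ideal_def, blast+\<close>)

lemma maximal_left_ideal_exists:
  assumes "left_ideal (L::'a::ring_1 set)" and "1 \<notin> L"
  shows "\<exists>M. maximal_left_ideal M \<and> L \<subseteq> M"
proof -
  let ?A = "{K. left_ideal K \<and> L \<subseteq> K \<and> (1::'a) \<notin> K}"
  have "\<exists>M\<in>?A. \<forall>X\<in>?A. M \<subseteq> X \<longrightarrow> X = M"
  proof (rule subset_Zorn_nonempty)
    show "?A \<noteq> {}" using assms by auto
  next
    fix C assume "C \<noteq> {}" and "subset.chain ?A C"
    then have "C \<subseteq> ?A" and "\<forall>X\<in>C. \<forall>Y\<in>C. X \<subseteq> Y \<or> Y \<subseteq> X"
      by (auto simp: subset_chain_def)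
    with \<open>C \<noteq> {}\<close> show "\<Union>C \<in> ?A"
      using left_ideal_Union_chain[of C] by auto
  qed
  then obtain M where M: "M \<in> ?A" and max: "\<forall>X\<in>?A. M \<subseteq> X \<longrightarrow> X = M" by blast
  have "maximal_left_ideal M"
    unfolding maximal_left_ideal_def
  proof (intro conjI allI impI)
    fix K assume K: "left_ideal K \<and> M \<subseteq> K"
    show "K = M \<or> K = UNIV"
      using K M max left_ideal_eq_UNIV_if_one[of K] by blast
  qed (use M in auto)
  with M show ?thesis by blast
qed

lemma jacobson_mult_left: "x \<in> jacobson \<Longrightarrow> r * x \<in> jacobson"
  unfolding jacobson_def maximal_left_ideal_def left_ideal_def by auto

lemma jacobson_uminus: "x \<in> jacobson \<Longrightarrow> - x \<in> jacobson"
  unfolding jacobson_def maximal_left_ideal_def left_ideal_def by auto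

text \<open>
  Otherwise the left ideal generated by 1 + j lies in a maximal left ideal, which also
  contains j and hence 1.
\<close>
lemma jacobson_one_plus_left_invertible:
  assumes "(j::'a::ring_1) \<in> jacobson"
  shows "\<exists>u. u * (1 + j) = 1"
proof (rule ccontr)
  assume "\<nexists>u. u * (1 + j) = 1"
  then have "1 \<notin> range (\<lambda>r. r * (1 + j))" by (metis rangeE)
  then obtain M where M: "maximal_left_ideal M" and sub: "range (\<lambda>r. r * (1 + j)) \<subseteq> M"
    using maximal_left_ideal_exists[OF left_ideal_principal] by blast
  have ideal: "left_ideal M" using M by (simp add: maximal_left_ideal_def)
  have "1 * (1 + j) \<in> range (\<lambda>r. r * (1 + j))" by (rule rangeI)
  with sub have "1 + j \<in> M" by auto
  moreover have "- j \<in> M" using jacobson_uminus[OF assms] M unfolding jacobson_def by blast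
  ultimately have "(1 + j) + - j \<in> M" using ideal unfolding left_ideal_def by blast
  then have "M = UNIV" using ideal left_ideal_eq_UNIV_if_one by simp
  with M show False by (simp add: maximal_left_ideal_def)
qed

lemma ring_unit_one_plus_jacobson:
  assumes j: "(j::'a::ring_1) \<in> jacobson"
  shows "ring_unit (1 + j)"
proof -
  obtain u where u: "u * (1 + j) = 1" using jacobson_one_plus_left_invertible j by blast
  then have "u = 1 + - (u * j)" by (simp add: algebra_simps)
  moreover have "- (u * j) \<in> jacobson" using j jacobson_mult_left jacobson_uminus by blast
  ultimately obtain v where v: "v * u = 1" using jacobson_one_plus_left_invertible by metis
  have "v = v * u * (1 + j)" using u by (simp add: mult.assoc)
  with v have "v = 1 + j" by simp
  with u v show ?thesis unfolding ring_unit_def by blast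
qed

lemma ring_unit_if_ring_unit_mult:
  assumes "ring_unit (x * y)" and "ring_unit (y * x)"
  shows "ring_unit (x::'a::ring_1)"
proof -
  obtain p where p: "x * y * p = 1" using assms(1) ring_unit_def by blast
  obtain q where q: "q * (y * x) = 1" using assms(2) ring_unit_def by blast
  have "q * y = (q * (y * x)) * (y * p)"
    using p by (metis mult.assoc mult_1_right)
  with q have "q * y = y * p" by simp
  with p q show ?thesis unfolding ring_unit_def by (metis mult.assoc)
qed

lemma local_ring_ring_unit_or_one_minus:
  assumes "local_ring TYPE('a::ring_1)"
  shows "ring_unit (x::'a) \<or> ring_unit (1 - x)"
proof (cases "x \<in> jacobson")
  case True
  then have "ring_unit (1 + - x)" using ring_unit_one_plus_jacobson jacobson_uminus by blast
  then show ?thesis by simp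
next
  case False
  then obtain y where "x * y - 1 \<in> jacobson" "y * x - 1 \<in> jacobson"
    using assms unfolding local_ring_def by blast
  then have "ring_unit (1 + (x * y - 1))" "ring_unit (1 + (y * x - 1))"
    using ring_unit_one_plus_jacobson by blast+
  then show ?thesis using ring_unit_if_ring_unit_mult by force
qed

lemma local_ring_ring_unit_minus_zero_or_one:
  assumes "local_ring TYPE('a::ring_1)"
  shows "\<exists>e. (e = 0 \<or> e = 1) \<and> ring_unit ((a::'a) - e)"
proof (cases "ring_unit a")
  case False
  then obtain y where "(1 - a) * y = 1" "y * (1 - a) = 1"
    using local_ring_ring_unit_or_one_minus[OF assms] unfolding ring_unit_def by blast
  then have "(a - 1) * - y = 1" "- y * (a - 1) = 1" by (simp_all add: algebra_simps)
  then show ?thesis unfolding ring_unit_def by blast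
qed auto

lemma central_power2:
  assumes "\<forall>x. s * x = x * s"
  shows "x * s\<^sup>2 = s\<^sup>2 * (x::'a::ring_1)" and "x * (s\<^sup>2 * y) = s\<^sup>2 * (x * y)"
  using assms by (metis mult.assoc power2_eq_square)+

text \<open>
  Naming \<open>s\<^sup>2\<close> keeps the simplifier from unfolding the power in the
  computations below.
\<close>
lemma m2_mult_power2_eq:
  "t = s\<^sup>2 \<Longrightarrow> m2_mult s (M2 a b c d) (M2 a' b' c' d') =
     M2 (a*a' + t*b*c') (a*b' + b*d') (c*a' + d*c') (t*c*b' + d*d')"
  by simp

lemma m2_mult_assoc:
  assumes "\<forall>x. s * x = x * s"
  shows "m2_mult s (m2_mult s X Y) Z = m2_mult s X (m2_mult s Y (Z::'a::ring_1 m2))"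
proof -
  define t where "t = s\<^sup>2"
  have comm: "x * t = t * x" "x * (t * y) = t * (x * y)" for x y
    using central_power2[OF assms] unfolding t_def by blast+
  show ?thesis
    by (cases X; cases Y; cases Z)
      (simp only: m2_mult_power2_eq[OF t_def]; simp add: algebra_simps comm)
qed

lemma m2_mult_I2_left [simp]: "m2_mult s I2 X = (X::'a::ring_1 m2)"
  by (cases X) (simp add: I2_def)

lemma m2_mult_I2_right [simp]: "m2_mult s X I2 = (X::'a::ring_1 m2)"
  by (cases X) (simp add: I2_def)

lemma m2_mult_sub_left:
  "m2_mult s (m2_sub X Y) Z = m2_sub (m2_mult s X Z) (m2_mult s Y (Z::'a::ring_1 m2))"
  by (cases X; cases Y; cases Z) (simp add: algebra_simps)

lemma m2_mult_sub_right:
  assumes "\<forall>x. s * x = x * s"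
  shows "m2_mult s Z (m2_sub X Y) = m2_sub (m2_mult s Z X) (m2_mult s Z (Y::'a::ring_1 m2))"
proof -
  define t where "t = s\<^sup>2"
  have comm: "x * t = t * x" "x * (t * y) = t * (x * y)" for x y
    using central_power2[OF assms] unfolding t_def by blast+
  show ?thesis
    by (cases X; cases Y; cases Z)
      (simp only: m2_mult_power2_eq[OF t_def] m2_sub.simps; simp add: algebra_simps comm)
qed

lemma m2_mult_zero_left [simp]: "m2_mult s (M2 0 0 0 0) X = (M2 0 0 0 0::'a::ring_1 m2)"
  by (cases X) simp

lemma m2_mult_zero_right [simp]: "m2_mult s X (M2 0 0 0 0) = (M2 0 0 0 0::'a::ring_1 m2)"
  by (cases X) simp

lemma m2_sub_self: "m2_sub X X = (M2 0 0 0 0::'a::ring_1 m2)"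
  by (cases X) simp

lemma m2_sub_zero: "m2_sub X (M2 0 0 0 0) = (X::'a::ring_1 m2)"
  by (cases X) simp

lemma m2_unit_diag: "ring_unit x \<Longrightarrow> ring_unit y \<Longrightarrow> m2_unit s (M2 x 0 0 (y::'a::ring_1))"
  unfolding ring_unit_def m2_unit_def I2_def
  by (elim exE conjE) (rule_tac x="M2 _ 0 0 _" in exI, simp)

lemma m2_unit_uminus:
  assumes "m2_unit s (M2 a b c d)"
  shows "m2_unit s (M2 (-a) (-b) (-c) (-d::'a::ring_1))"
proof -
  obtain x y z w where "m2_mult s (M2 a b c d) (M2 x y z w) = I2"
      "m2_mult s (M2 x y z w) (M2 a b c d) = I2"
    using assms unfolding m2_unit_def by (metis m2.exhaust)
  then have "m2_mult s (M2 (-a) (-b) (-c) (-d)) (M2 (-x) (-y) (-z) (-w)) = I2"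
      "m2_mult s (M2 (-x) (-y) (-z) (-w)) (M2 (-a) (-b) (-c) (-d)) = I2"
    by (simp_all add: I2_def)
  then show ?thesis unfolding m2_unit_def by blast
qed

lemma m2_unit_sub_swap:
  "m2_unit s (m2_sub X Y) \<Longrightarrow> m2_unit s (m2_sub Y (X::'a::ring_1 m2))"
  by (cases X; cases Y) (fastforce dest: m2_unit_uminus)

lemma m2_unit_Schur_complement:
  assumes "\<forall>x. s * x = x * s" and a: "a * a' = 1" "a' * a = 1"
    and \<delta>: "(d - s\<^sup>2*c*a'*b) * \<delta>' = 1" "\<delta>' * (d - s\<^sup>2*c*a'*b) = (1::'a::ring_1)"
  shows "m2_unit s (M2 a b c d)"
proof -
  define t where "t = s\<^sup>2"
  have comm: "x * t = t * x" "x * (t * y) = t * (x * y)" for x y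
    using central_power2[OF assms(1)] unfolding t_def by blast+
  define \<delta> where "\<delta> = d - t*c*a'*b"
  have d: "d = \<delta> + t*c*(a'*b)" unfolding \<delta>_def by (simp add: mult.assoc)
  have \<delta>': "\<delta> * \<delta>' = 1" "\<delta>' * \<delta> = 1" using \<delta> unfolding \<delta>_def t_def by auto
  have cancel: "a * (a' * x) = x" "a' * (a * x) = x" "\<delta> * (\<delta>' * x) = x" "\<delta>' * (\<delta> * x) = x" for x
    using a \<delta>' by (simp_all add: mult.assoc[symmetric])
  let ?Q = "M2 (a' + t*a'*b*\<delta>'*c*a') (-(a'*b*\<delta>')) (-(\<delta>'*c*a')) \<delta>'"
  have "m2_mult s (M2 a b c d) ?Q = I2" "m2_mult s ?Q (M2 a b c d) = I2"
    unfolding d I2_def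
    by (simp only: m2_mult_power2_eq[OF t_def]; simp add: algebra_simps comm a cancel \<delta>')+
  then show ?thesis unfolding m2_unit_def by blast
qed

lemma m2_idempotent_unit_eq_I2:
  assumes "\<forall>x. s * x = x * s" and "m2_mult s E E = E" and "m2_unit s (E::'a::ring_1 m2)"
  shows "E = I2"
proof -
  obtain Q where Q: "m2_mult s E Q = I2" using assms(3) unfolding m2_unit_def by blast
  have "E = m2_mult s E (m2_mult s E Q)" using Q by simp
  also have "\<dots> = m2_mult s (m2_mult s E E) Q" using m2_mult_assoc[OF assms(1)] by simp
  also have "\<dots> = I2" using assms(2) Q by simp
  finally show ?thesis .
qed

lemma m2_commute_diag_1_0_imp_diag:
  "m2_mult s B (M2 1 0 0 0) = m2_mult s (M2 1 0 0 0) (B::'a::ring_1 m2) \<Longrightarrow> \<exists>a b. B = M2 a 0 0 b"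
  by (cases B) auto

lemma m2_similar_diag_if_commute:
  assumes "\<forall>x. s * x = x * s"
    and PQ: "m2_mult s P Q = I2" "m2_mult s Q P = I2"
    and EP: "m2_mult s E P = m2_mult s P (M2 1 0 0 0)"
    and AE: "m2_mult s A E = m2_mult s E (A::'a::ring_1 m2)"
  shows "\<exists>a b. m2_similar s A (M2 a 0 0 b)"
proof -
  note assoc = m2_mult_assoc[OF assms(1)]
  let ?B = "m2_mult s (m2_mult s Q A) P"
  have D: "M2 1 0 0 0 = m2_mult s Q (m2_mult s E P)"
    using EP PQ assoc by (metis m2_mult_I2_left)
  have "m2_mult s ?B (M2 1 0 0 0) = m2_mult s Q (m2_mult s (m2_mult s A E) P)"
    using EP assoc by simp
  also have "\<dots> = m2_mult s Q (m2_mult s E (m2_mult s (m2_mult s P Q) (m2_mult s A P)))"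
    using AE PQ assoc by simp
  also have "\<dots> = m2_mult s (M2 1 0 0 0) ?B"
    unfolding D using assoc by simp
  finally obtain a b where "?B = M2 a 0 0 b"
    using m2_commute_diag_1_0_imp_diag by blast
  with PQ show ?thesis unfolding m2_similar_def by metis
qed

text \<open>
  The conjugating matrix is \<open>E\<close> with its second column negated: its first column
  spans the image of \<open>E\<close>, its second the kernel of \<open>E\<close>.
\<close>
lemma m2_idempotent_similar_diag_1_0:
  assumes "\<forall>x. s * x = x * s" and "local_ring TYPE('a::ring_1)"
    and EE: "m2_mult s (M2 e f g h) (M2 e f g h) = M2 e f g (h::'a)"
    and "M2 e f g h \<noteq> I2" and "ring_unit e"
  shows "\<exists>P Q. m2_mult s P Q = I2 \<and> m2_mult s Q P = I2 \<and>
      m2_mult s (M2 e f g h) P = m2_mult s P (M2 1 0 0 0)"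
proof -
  obtain e' where e': "e * e' = 1" "e' * e = 1" using \<open>ring_unit e\<close> ring_unit_def by blast
  define \<sigma> where "\<sigma> = h - s\<^sup>2*g*e'*f"
  have "\<not> ring_unit \<sigma>"
  proof
    assume "ring_unit \<sigma>"
    then have "m2_unit s (M2 e f g h)"
      using m2_unit_Schur_complement[OF assms(1) e'] unfolding ring_unit_def \<sigma>_def by blast
    then show False using m2_idempotent_unit_eq_I2[OF assms(1) EE] assms(4) by blast
  qed
  then obtain y where y: "(1 - \<sigma>) * y = 1" "y * (1 - \<sigma>) = 1"
    using local_ring_ring_unit_or_one_minus[OF assms(2)] unfolding ring_unit_def by blast
  have Schur: "(1 - h) - s\<^sup>2*g*e'*(-f) = 1 - \<sigma>" unfolding \<sigma>_def by (simp add: algebra_simps)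
  have "m2_unit s (M2 e (-f) g (1 - h))"
    using m2_unit_Schur_complement[OF assms(1) e', of "1 - h" g "-f" y] y unfolding Schur by blast
  moreover have "m2_mult s (M2 e f g h) (M2 e (-f) g (1 - h)) =
      m2_mult s (M2 e (-f) g (1 - h)) (M2 1 0 0 0)"
    using EE by (simp add: algebra_simps)
  ultimately show ?thesis unfolding m2_unit_def by blast
qed

lemma m2_similar_diag_if_commute_idempotent:
  assumes "\<forall>x. s * x = x * s" and "local_ring TYPE('a::ring_1)"
    and EE: "m2_mult s E E = E" and "E \<noteq> M2 0 0 0 0" and "E \<noteq> I2"
    and AE: "m2_mult s A E = m2_mult s E (A::'a m2)"
  shows "\<exists>a b. m2_similar s A (M2 a 0 0 b)"
proof -
  note sub_left = m2_mult_sub_left and sub_right = m2_mult_sub_right[OF assms(1)]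
  obtain e f g h where E: "E = M2 e f g h" by (cases E)
  define E' where "E' = m2_sub I2 E"
  have E': "E' = M2 (1 - e) (-f) (-g) (1 - h)" unfolding E'_def E I2_def by simp
  have "m2_mult s E' E' = E'"
    unfolding E'_def sub_left sub_right using EE by (simp add: m2_sub_self m2_sub_zero)
  moreover have "E' \<noteq> I2"
    using \<open>E \<noteq> M2 0 0 0 0\<close> unfolding E' E I2_def by auto
  moreover have "m2_mult s A E' = m2_mult s E' A"
    unfolding E'_def sub_left sub_right using AE by simp
  moreover have "ring_unit e \<or> ring_unit (1 - e)"
    using local_ring_ring_unit_or_one_minus[OF assms(2)] by blast
  ultimately show ?thesis
    using m2_idempotent_similar_diag_1_0[OF assms(1,2)] m2_similar_diag_if_commute[OF assms(1)]
      EE \<open>E \<noteq> I2\<close> AE unfolding E E' by metis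
qed

lemma m2_strongly_clean_conj:
  assumes "\<forall>x. s * x = x * s"
    and PQ: "m2_mult s P Q = I2" "m2_mult s Q P = I2"
    and "m2_strongly_clean s (B::'a::ring_1 m2)"
  shows "m2_strongly_clean s (m2_mult s P (m2_mult s B Q))"
proof -
  note assoc = m2_mult_assoc[OF assms(1)]
  define conj where "conj X = m2_mult s P (m2_mult s X Q)" for X
  have conj_mult: "conj (m2_mult s X Y) = m2_mult s (conj X) (conj Y)" for X Y
    unfolding conj_def using PQ assoc by (metis m2_mult_I2_left)
  have conj_sub: "conj (m2_sub X Y) = m2_sub (conj X) (conj Y)" for X Y
    unfolding conj_def m2_mult_sub_left m2_mult_sub_right[OF assms(1)] ..
  have conj_I2: "conj I2 = I2" unfolding conj_def using PQ by simp
  obtain F U where F: "m2_mult s F F = F" "m2_mult s B F = m2_mult s F B"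
      and U: "m2_mult s (m2_sub B F) U = I2" "m2_mult s U (m2_sub B F) = I2"
    using assms(4) unfolding m2_strongly_clean_def m2_unit_def by blast
  have "m2_mult s (conj F) (conj F) = conj F" "m2_mult s (conj B) (conj F) = m2_mult s (conj F) (conj B)"
    using F by (simp_all flip: conj_mult)
  moreover have "m2_unit s (m2_sub (conj B) (conj F))"
    using U conj_I2 unfolding m2_unit_def by (metis conj_mult conj_sub)
  ultimately show ?thesis unfolding m2_strongly_clean_def conj_def by blast
qed

lemma m2_strongly_clean_if_similar:
  assumes "\<forall>x. s * x = x * s" and "m2_similar s A B" and "m2_strongly_clean s (B::'a::ring_1 m2)"
  shows "m2_strongly_clean s A"
proof -
  obtain P Q where PQ: "m2_mult s P Q = I2" "m2_mult s Q P = I2"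
      and B: "B = m2_mult s (m2_mult s Q A) P"
    using assms(2) unfolding m2_similar_def by blast
  have "m2_mult s P (m2_mult s B Q) = m2_mult s (m2_mult s P Q) (m2_mult s A (m2_mult s P Q))"
    unfolding B by (simp add: m2_mult_assoc[OF assms(1)])
  also have "\<dots> = A" using PQ by simp
  finally show ?thesis using m2_strongly_clean_conj[OF assms(1) PQ assms(3)] by simp
qed

lemma m2_strongly_clean_diag:
  assumes "local_ring TYPE('a::ring_1)"
  shows "m2_strongly_clean s (M2 a 0 0 (b::'a))"
proof -
  obtain e1 e2 where e: "e1 = 0 \<or> e1 = 1" "ring_unit (a - e1)" "e2 = 0 \<or> e2 = 1" "ring_unit (b - e2)"
    using local_ring_ring_unit_minus_zero_or_one[OF assms] by metis
  then have "m2_mult s (M2 e1 0 0 e2) (M2 e1 0 0 e2) = M2 e1 0 0 e2"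
      "m2_mult s (M2 a 0 0 b) (M2 e1 0 0 e2) = m2_mult s (M2 e1 0 0 e2) (M2 a 0 0 b)"
      "m2_unit s (m2_sub (M2 a 0 0 b) (M2 e1 0 0 e2))"
    by (auto intro: m2_unit_diag)
  then show ?thesis unfolding m2_strongly_clean_def by blast
qed

theorem corollary2p12:
  fixes s :: "'a::ring_1" and A :: "'a m2"
  assumes "local_ring TYPE('a)"
    and "\<forall>x. s * x = x * s"
  shows "m2_strongly_clean s A \<longleftrightarrow>
           m2_unit s A \<or> m2_unit s (m2_sub I2 A) \<or>
           (\<exists>a b. m2_similar s A (M2 a 0 0 b))"
proof
  assume "m2_strongly_clean s A"
  then obtain E where E: "m2_mult s E E = E" "m2_mult s A E = m2_mult s E A" "m2_unit s (m2_sub A E)"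
    unfolding m2_strongly_clean_def by blast
  consider "E = M2 0 0 0 0" | "E = I2" | "E \<noteq> M2 0 0 0 0" "E \<noteq> I2" by blast
  then show "m2_unit s A \<or> m2_unit s (m2_sub I2 A) \<or> (\<exists>a b. m2_similar s A (M2 a 0 0 b))"
  proof cases
    case 1
    then show ?thesis using E(3) by (simp add: m2_sub_zero)
  next
    case 2
    then show ?thesis using E(3) m2_unit_sub_swap by blast
  next
    case 3
    then show ?thesis using m2_similar_diag_if_commute_idempotent[OF assms(2,1) E(1)] E(2) by blast
  qed
next
  assume "m2_unit s A \<or> m2_unit s (m2_sub I2 A) \<or> (\<exists>a b. m2_similar s A (M2 a 0 0 b))"
  moreover have "m2_strongly_clean s A" if "m2_unit s A"
    unfolding m2_strongly_clean_def
    by (rule exI[of _ "M2 0 0 0 0"]) (simp add: m2_sub_zero that)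
  moreover have "m2_strongly_clean s A" if "m2_unit s (m2_sub I2 A)"
    unfolding m2_strongly_clean_def
    by (rule exI[of _ I2]) (simp add: m2_unit_sub_swap that)
  ultimately show "m2_strongly_clean s A"
    using m2_strongly_clean_if_similar[OF assms(2)] m2_strongly_clean_diag[OF assms(1)] by blast
qed

end
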